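(* Let $n$ be odd. Then $$M_{Q_{4n}}\!\Big(1+(x^n+1)(x+x^2+\cdots+x^{(n-1)/2})+y\,(x^n+1)(x+x^2+\cdots+x^{(n-1)/2})\Big)=2n-1,$$ and $M_{Q_{4n}}(x^2+1)=16$. In particular $\lambda(Q_{4n})\le\min\{16,2n-1\}$ whenever $n\ge 3$ is odd.
   Context: $Q_{4n}=\langle x,y : x^{2n}=1,\ y^2=x^n,\ xy=yx^{-1}\rangle$. For $f,g\in\mathbb Z[x]$, $M_{Q_{4n}}(f+yg)=\prod_{z^{2n}=1}\big(f(z)f(z^{-1})-z^ng(z)g(z^{-1})\big)$ (the integer group determinant of $Q_{4n}$). $\lambda(G)$ is the smallest absolute value $\ge2$ of an integer group determinant of $G$. *)

theory Defs
  imports "HOL-Computational_Algebra.Polynomial" Complex_Main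
begin

definition ipoly :: "int poly \<Rightarrow> complex \<Rightarrow> complex" where
  "ipoly p z = poly (map_poly of_int p) z"

text \<open>Integer group determinant of Q_{4n} of the group ring element f + y g:
  product over all 2n-th roots of unity z of f(z)f(z^-1) - z^n g(z)g(z^-1).\<close>
definition M_Q :: "nat \<Rightarrow> int poly \<Rightarrow> int poly \<Rightarrow> complex" where
  "M_Q n f g = (\<Prod>z\<in>{z::complex. z ^ (2*n) = 1}.
      ipoly f z * ipoly f (inverse z) - z ^ n * ipoly g z * ipoly g (inverse z))"

definition lambda_Q :: "nat \<Rightarrow> nat" where
  "lambda_Q n = (LEAST k. 2 \<le> k \<and> (\<exists>f g. cmod (M_Q n f g) = real k))"

end

theory Submission
  imports Defs "HOL-Computational_Algebra.Fundamental_Theorem_Algebra"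
begin

text \<open>
  Write \<open>u = z\<^sup>n\<close> for a \<open>2n\<close>-th root of unity \<open>z\<close>. If \<open>u = -1\<close>, the factor \<open>x\<^sup>n + 1\<close> kills
  both \<open>f - 1\<close> and \<open>g\<close>, so the factor of the group determinant at \<open>z\<close> is \<open>1\<close>. If \<open>u = 1\<close>,
  putting \<open>a = h(z)\<close>, \<open>b = h(z\<^sup>-\<^sup>1)\<close> the factor is \<open>(1 + 2a)(1 + 2b) - 4ab = 1 + 2(a + b)\<close>,
  and for odd \<open>n = 2m + 1\<close> the exponents \<open>\<plusminus>1, \<dots>, \<plusminus>m\<close> cover all non-zero residues mod \<open>n\<close>,
  so \<open>a + b\<close> is \<open>n - 1\<close> at \<open>z = 1\<close> and \<open>-1\<close> at the other \<open>n\<close>-th roots of unity. The \<open>n - 1\<close>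
  factors \<open>-1\<close> cancel, leaving \<open>2n - 1\<close>. For \<open>x\<^sup>2 + 1\<close> one uses
  \<open>\<Prod>\<^sub>z (w - z) = w\<^sup>2\<^sup>n - 1\<close> at \<open>w = \<plusminus>i\<close>, which gives \<open>4\<close> for odd \<open>n\<close>, once for \<open>z\<close> and once for \<open>z\<^sup>-\<^sup>1\<close>.
\<close>

lemma map_poly_of_int_add:
  "map_poly (of_int :: int \<Rightarrow> 'a::comm_ring_1) (p + q) = map_poly of_int p + map_poly of_int q"
  by (rule poly_eqI) (simp add: coeff_map_poly)

lemma map_poly_of_int_mult:
  "map_poly (of_int :: int \<Rightarrow> 'a::comm_ring_1) (p * q) = map_poly of_int p * map_poly of_int q"
  by (rule poly_eqI) (simp add: coeff_map_poly coeff_mult)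

lemma ipoly_add [simp]: "ipoly (p + q) z = ipoly p z + ipoly q z"
  and ipoly_mult [simp]: "ipoly (p * q) z = ipoly p z * ipoly q z"
  and ipoly_monom_1 [simp]: "ipoly (monom 1 k) z = z ^ k"
  and ipoly_1 [simp]: "ipoly 1 z = 1"
  and ipoly_0 [simp]: "ipoly 0 z = 0"
  by (simp_all add: ipoly_def map_poly_of_int_add map_poly_of_int_mult poly_monom map_poly_monom)

lemma ipoly_sum: "ipoly (\<Sum>k\<in>A. p k) z = (\<Sum>k\<in>A. ipoly (p k) z)"
  by (induction A rule: infinite_finite_induct) simp_all

lemma prod_diff_roots_unity:
  assumes "m > 0"
  shows "(\<Prod>z\<in>{z::complex. z ^ m = 1}. w - z) = w ^ m - 1"
proof -
  define p :: "complex poly" where "p = [:-1:] + monom 1 m"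
  have poly_p: "poly p z = z ^ m - 1" for z
    by (simp add: p_def poly_monom)
  have "lead_coeff p = 1"
    using assms unfolding p_def by (subst lead_coeff_add_le) (simp_all add: degree_monom_eq)
  moreover have "rsquarefree p"
    unfolding rsquarefree_roots
    using assms by (auto simp: poly_p p_def pderiv_add pderiv_monom poly_monom power_0_left)
  ultimately have "p = (\<Prod>z | poly p z = 0. [:-z, 1:])"
    using complex_poly_decompose_rsquarefree by (metis smult_1_left)
  from arg_cong[OF this, of "\<lambda>q. poly q w"] show ?thesis
    by (simp add: poly_p poly_prod)
qed

lemma prod_roots_unity_inverse:
  "(\<Prod>z\<in>{z::complex. z ^ m = 1}. f (inverse z)) = (\<Prod>z\<in>{z::complex. z ^ m = 1}. f z)"
  by (rule prod.reindex_bij_witness[of _ inverse inverse]) (auto simp: power_inverse)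

lemma roots_unity_double_cases:
  fixes z :: complex
  assumes "z ^ (2 * n) = 1"
  shows "z ^ n = 1 \<or> z ^ n = -1"
proof -
  have "(z ^ n) ^ 2 = 1"
    using assms by (simp add: power_mult[symmetric] mult.commute)
  then show ?thesis
    by (simp add: power2_eq_1_iff)
qed

lemma sum_pow_add_sum_inverse_pow:
  fixes z :: complex
  assumes "z ^ (2 * m + 1) = 1"
  shows "(\<Sum>k\<in>{1..m}. z ^ k) + (\<Sum>k\<in>{1..m}. inverse z ^ k) = (if z = 1 then 2 * of_nat m else -1)"
proof -
  define n where "n = 2 * m + 1"
  have "z \<noteq> 0" and zn: "z ^ n = 1"
    using assms by (auto simp: n_def)
  then have "inverse z ^ k = z ^ (n - k)" if "k \<le> n" for k
    using that by (simp add: power_diff power_inverse flip: inverse_eq_divide)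
  then have "(\<Sum>k\<in>{1..m}. inverse z ^ k) = (\<Sum>k\<in>{1..m}. z ^ (n - k))"
    by (intro sum.cong) (auto simp: n_def)
  also have "\<dots> = (\<Sum>k\<in>{m+1..n-1}. z ^ k)"
    by (rule sum.reindex_bij_witness[of _ "\<lambda>k. n - k" "\<lambda>k. n - k"]) (auto simp: n_def)
  finally have "(\<Sum>k\<in>{1..m}. z ^ k) + (\<Sum>k\<in>{1..m}. inverse z ^ k)
      = (\<Sum>k\<in>{1..m} \<union> {m+1..n-1}. z ^ k)"
    by (simp add: sum.union_disjoint)
  also have "{1..m} \<union> {m+1..n-1} = {1..n-1}"
    by (auto simp: n_def)
  also have "(\<Sum>k\<in>{1..n-1}. z ^ k) = (\<Sum>k<n. z ^ k) - 1"
  proof -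
    have "{..<n} = insert 0 {1..n-1}"
      by (auto simp: n_def)
    then show ?thesis
      by simp
  qed
  also have "(\<Sum>k<n. z ^ k) = (if z = 1 then of_nat n else 0)"
    using zn by (simp add: geometric_sum)
  finally show ?thesis
    by (simp add: n_def)
qed

lemma prod_roots_unity_sign:
  fixes c :: "'a::comm_ring_1"
  assumes "odd n"
  shows "(\<Prod>z\<in>{z::complex. z ^ (2 * n) = 1}. if z = 1 then c else if z ^ n = 1 then -1 else 1) = c"
proof -
  define S where "S = {z::complex. z ^ (2 * n) = 1}"
  have "n > 0"
    using assms by (rule odd_pos)
  then have "finite S"
    by (simp add: S_def finite_roots_unity)
  have roots_n: "S \<inter> {z. z ^ n = 1} = {z. z ^ n = 1}"
    by (auto simp: S_def power_mult mult.commute[of 2])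
  have "card ({z::complex. z ^ n = 1} - {1}) = n - 1"
    using \<open>n > 0\<close> by (simp add: card_roots_unity_eq finite_roots_unity)
  then have "(-1 :: 'a) ^ card ((S - {1}) \<inter> {z. z ^ n = 1}) = 1"
    using assms roots_n by (simp add: Diff_Int_distrib2 Int_commute neg_one_even_power)
  moreover have "1 \<in> S"
    by (simp add: S_def)
  ultimately show ?thesis
    using \<open>finite S\<close> by (simp add: S_def[symmetric] prod.remove prod.If_cases)
qed

lemma factor_at_root_eq:
  fixes z :: complex and h :: "int poly"
  assumes "z ^ (2 * n) = 1"
  defines "f \<equiv> 1 + (monom 1 n + 1) * h" and "g \<equiv> (monom 1 n + 1) * h"
  shows "ipoly f z * ipoly f (inverse z) - z ^ n * ipoly g z * ipoly g (inverse z)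
       = (if z ^ n = 1 then 1 + 2 * (ipoly h z + ipoly h (inverse z)) else 1)"
  using roots_unity_double_cases[OF assms(1)]
  by (auto simp: f_def g_def power_inverse algebra_simps)

lemma M_Q_odd_family:
  assumes "odd n"
  defines "h \<equiv> (\<Sum>k\<in>{1..(n - 1) div 2}. monom (1::int) k)"
  shows "M_Q n (1 + (monom 1 n + 1) * h) ((monom 1 n + 1) * h) = of_int (2 * int n - 1)"
proof -
  define m where "m = (n - 1) div 2"
  have n: "n = 2 * m + 1"
    using assms(1) by (simp add: m_def)
  have factor: "ipoly (1 + (monom 1 n + 1) * h) z * ipoly (1 + (monom 1 n + 1) * h) (inverse z)
      - z ^ n * ipoly ((monom 1 n + 1) * h) z * ipoly ((monom 1 n + 1) * h) (inverse z)
      = (if z = 1 then of_int (2 * int n - 1) else if z ^ n = 1 then -1 else 1)"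
    if "z ^ (2 * n) = 1" for z :: complex
    using factor_at_root_eq[OF that, of h] sum_pow_add_sum_inverse_pow[of z m]
    by (simp add: h_def ipoly_sum m_def[symmetric] n)
  have "M_Q n (1 + (monom 1 n + 1) * h) ((monom 1 n + 1) * h)
      = (\<Prod>z\<in>{z::complex. z ^ (2 * n) = 1}. if z = 1 then of_int (2 * int n - 1) else if z ^ n = 1 then -1 else 1)"
    unfolding M_Q_def by (rule prod.cong[OF refl], rule factor) simp
  then show ?thesis
    by (simp only: prod_roots_unity_sign[OF assms(1)])
qed

lemma prod_roots_unity_square_plus_one:
  assumes "odd n"
  shows "(\<Prod>z\<in>{z::complex. z ^ (2 * n) = 1}. z ^ 2 + 1) = 4"
proof -
  have "(\<Prod>z\<in>{z::complex. z ^ (2 * n) = 1}. z ^ 2 + 1)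
      = (\<Prod>z\<in>{z::complex. z ^ (2 * n) = 1}. (\<i> - z) * (- \<i> - z))"
    by (intro prod.cong) (auto simp: algebra_simps power2_eq_square)
  also have "\<dots> = (\<i> ^ (2 * n) - 1) * ((- \<i>) ^ (2 * n) - 1)"
    using odd_pos[OF assms] by (simp add: prod.distrib prod_diff_roots_unity)
  also have "\<dots> = 4"
    using assms by (simp add: power_mult)
  finally show ?thesis .
qed

lemma M_Q_square_plus_one:
  assumes "odd n"
  shows "M_Q n (monom 1 2 + 1) 0 = 16"
  using prod_roots_unity_square_plus_one[OF assms]
    prod_roots_unity_inverse[of "\<lambda>z. z ^ 2 + 1" "2 * n"]
  by (simp add: M_Q_def prod.distrib)

lemma lambda_Q_le:
  assumes "2 \<le> k" and "cmod (M_Q n f g) = real k"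
  shows "lambda_Q n \<le> k"
  unfolding lambda_Q_def using assms by (intro Least_le) blast

theorem mainTheorem8:
  fixes n :: nat
  assumes "odd n"
  defines "h \<equiv> (\<Sum>k\<in>{1..(n - 1) div 2}. monom (1::int) k)"
  shows "M_Q n (1 + (monom 1 n + 1) * h) ((monom 1 n + 1) * h) = of_int (2 * int n - 1)
         \<and> M_Q n (monom 1 2 + 1) 0 = 16
         \<and> (n \<ge> 3 \<longrightarrow> lambda_Q n \<le> min 16 (2 * n - 1))"
proof (intro conjI impI)
  show family: "M_Q n (1 + (monom 1 n + 1) * h) ((monom 1 n + 1) * h) = of_int (2 * int n - 1)"
    unfolding h_def using assms(1) by (rule M_Q_odd_family)
  show square: "M_Q n (monom 1 2 + 1) 0 = 16"
    using assms(1) by (rule M_Q_square_plus_one)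
  assume "n \<ge> 3"
  have "lambda_Q n \<le> 16"
    by (rule lambda_Q_le[of _ _ "monom 1 2 + 1" 0]) (simp_all add: square)
  moreover have "lambda_Q n \<le> 2 * n - 1"
  proof (rule lambda_Q_le)
    show "2 \<le> 2 * n - 1"
      using \<open>n \<ge> 3\<close> by simp
    have "of_int (2 * int n - 1) = complex_of_real (real (2 * n - 1))"
      using \<open>n \<ge> 3\<close> by (simp add: of_nat_diff)
    then show "cmod (M_Q n (1 + (monom 1 n + 1) * h) ((monom 1 n + 1) * h)) = real (2 * n - 1)"
      by (simp only: family norm_of_real abs_of_nat)
  qed
  ultimately show "lambda_Q n \<le> min 16 (2 * n - 1)"
    by simp
qed

end
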